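(* Let $(\varphi_\alpha)_{\alpha>0}$ be a non-linear regularizing filter satisfying Assumption B, let $(\delta_k)_k,(\alpha_k)_k$ be positive null sequences with $\delta_k^2/\alpha_k\to0$, and let $y\in\operatorname{ran}(\mathbf{A})$ with $\mathbf{T}_v^*(y)\in\operatorname{ran}(\Phi_{\tilde\alpha,\kappa})$ for some $\tilde\alpha>0$. Let $(y^k)_k$ be a sequence in $\mathbb{Y}$ with $\|y^k-y\|\le\delta_k$. Then $\mathbf{B}_{\alpha_k}(y^k)\rightharpoonup\mathbf{A}^+y$ weakly in $\mathbb{X}$ as $k\to\infty$.
   Context: $\mathbb{X},\mathbb{Y}$ are real Hilbert spaces and $\mathbf{A}\colon\mathbb{X}\to\mathbb{Y}$ is bounded linear with Moore–Penrose inverse $\mathbf{A}^+$. $\Lambda$ is an at most countable index set. A diagonal frame decomposition (DFD) of $\mathbf{A}$ is a triple $(u_\lambda,v_\lambda,\kappa_\lambda)_{\lambda\in\Lambda}$ such that $(u_\lambda)$ is a frame of $\ker(\mathbf{A})^\perp$, $(v_\lambda)$ is a frame of $\overline{\operatorname{ran}(\mathbf{A})}$, and $\kappa_\lambda>0$ with $\mathbf{A}^*v_\lambda=\kappa_\lambda u_\lambda$ for all $\lambda$; we fix such a DFD with $\sup_\lambda\kappa_\lambda<\infty$. $(\bar u_\lambda)$ is a dual frame of $(u_\lambda)$, i.e. $x=\sum_\lambda\langle x,u_\lambda\rangle\bar u_\lambda$ for all $x\in\ker(\mathbf{A})^\perp$. $\mathbf{T}_{\bar u}\colon\ell^2(\Lambda)\to\mathbb{X}$,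 $(c_\lambda)\mapsto\sum_\lambda c_\lambda\bar u_\lambda$, and $\mathbf{T}_v^*\colon\mathbb{Y}\to\ell^2(\Lambda)$, $y\mapsto(\langle y,v_\lambda\rangle)_\lambda$. $\mathbf{M}_\kappa\colon\ell^2(\Lambda)\to\ell^2(\Lambda)$, $(x_\lambda)\mapsto(\kappa_\lambda x_\lambda)$; $\mathbf{M}_\kappa^+$ is its Moore–Penrose inverse, with domain $\{(c_\lambda)\in\ell^2:(c_\lambda/\kappa_\lambda)\in\ell^2\}$ and $\mathbf{M}_\kappa^+((c_\lambda))=(c_\lambda/\kappa_\lambda)$. A non-linear regularizing filter is a family $(\varphi_\alpha)_{\alpha>0}$ of functions $\varphi_\alpha\colon(0,\infty)\times\mathbb{R}\to\mathbb{R}$ such that for all $\alpha,\kappa>0$: (F1) $\varphi_\alpha(\kappa,\cdot)$ is non-decreasing; (F2) $\varphi_\alpha(\kappa,\cdot)$ is 1-Lipschitz; (F3) $\varphi_\alpha(\kappa,0)=0$; (F4) $\lim_{\alpha\to0}\varphi_\alpha(\kappa,c)=c$ for all $c\in\mathbb{R}$. $\Phi_{\alpha,\kappa}\colon\ell^2(\Lambda)\to\ell^2(\Lambda)$, $(c_\lambda)\mapsto(\varphi_\alpha(\kappa_\lambda,c_\lambda))_\lambda$. Non-linear filtered DFD: $\operatorname{dom}(\mathbf{B}_\alpha)=\{y\in\mathbb{Y}:\Phi_{\alpha,\kappa}(\mathbf{T}_v^*y)\in\operatorname{dom}(\mathbf{M}_\kappa^+)\}$ and $\mathbf{B}_\alpha(y)=\sum_\lambda\kappa_\lambda^{-1}\varphi_\alpha(\kappa_\lambda,\langle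 y,v_\lambda\rangle)\bar u_\lambda=\mathbf{T}_{\bar u}\circ\mathbf{M}_\kappa^+\circ\Phi_{\alpha,\kappa}\circ\mathbf{T}_v^*(y)$. Assumption B: (B1) for all $\kappa>0$ and $x\in\mathbb{R}$, $(|\varphi_\alpha(\kappa,x)|)_{\alpha>0}$ is monotonically increasing as $\alpha\downarrow0$; (B2) there exist $d,e>0$ such that for all $\kappa,\alpha>0$, $x\in\mathbb{R}$: $|x|\le d\alpha/\kappa\Rightarrow|\varphi_\alpha(\kappa,x)|\le\frac{e\kappa}{\sqrt\alpha}|x|$. *)

theory Defs
  imports "HOL-Analysis.Analysis"
begin

definition orth_compl :: "'a::real_inner set \<Rightarrow> 'a set" where
  "orth_compl W = {x. \<forall>w\<in>W. inner x w = 0}"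

definition ker :: "('a \<Rightarrow> 'b::zero) \<Rightarrow> 'a set" where
  "ker A = {x. A x = 0}"

definition l2 :: "'i set \<Rightarrow> ('i \<Rightarrow> real) set" where
  "l2 \<Lambda> = {c. (\<lambda>l. (c l)\<^sup>2) summable_on \<Lambda>}"

definition is_frame :: "'a::real_inner set \<Rightarrow> ('i \<Rightarrow> 'a) \<Rightarrow> 'i set \<Rightarrow> bool" where
  "is_frame V u \<Lambda> \<longleftrightarrow> (\<forall>l\<in>\<Lambda>. u l \<in> V) \<and>
     (\<exists>a b. 0 < a \<and> a \<le> b \<and> (\<forall>x\<in>V. (\<lambda>l. (inner x (u l))\<^sup>2) summable_on \<Lambda> \<and>
        a * (norm x)\<^sup>2 \<le> (\<Sum>\<^sub>\<infinity>l\<in>\<Lambda>. (inner x (u l))\<^sup>2) \<and>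
        (\<Sum>\<^sub>\<infinity>l\<in>\<Lambda>. (inner x (u l))\<^sup>2) \<le> b * (norm x)\<^sup>2))"

text \<open>Diagonal frame decomposition (u, v, \<kappa>) of A with bounded \<kappa>.
  A* v_l = \<kappa>_l u_l is written out via the defining property of the adjoint.\<close>
definition is_DFD :: "('x::real_inner \<Rightarrow> 'y::real_inner) \<Rightarrow> 'i set \<Rightarrow>
    ('i \<Rightarrow> 'x) \<Rightarrow> ('i \<Rightarrow> 'y) \<Rightarrow> ('i \<Rightarrow> real) \<Rightarrow> bool" where
  "is_DFD A \<Lambda> u v \<kappa> \<longleftrightarrow> countable \<Lambda> \<and>
     is_frame (orth_compl (ker A)) u \<Lambda> \<and>
     is_frame (closure (range A)) v \<Lambda> \<and>
     (\<forall>l\<in>\<Lambda>. 0 < \<kappa> l \<and> (\<forall>x. inner (A x) (v l) = \<kappa> l * inner x (u l)))"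

definition is_dual_frame :: "'x::real_inner set \<Rightarrow> 'i set \<Rightarrow> ('i \<Rightarrow> 'x) \<Rightarrow> ('i \<Rightarrow> 'x) \<Rightarrow> bool" where
  "is_dual_frame V \<Lambda> u ub \<longleftrightarrow> is_frame V ub \<Lambda> \<and>
     (\<forall>x\<in>V. ((\<lambda>l. inner x (u l) *\<^sub>R ub l) has_sum x) \<Lambda>)"

text \<open>Moore-Penrose inverse: A^+ y is the unique x in ker(A)^perp with Ax - y orthogonal
  to ran(A) (i.e. A x = projection of y onto the closure of ran A);
  dom(A^+) = ran A + ran(A)^perp.\<close>
definition mp_inverse :: "('x::real_inner \<Rightarrow> 'y::real_inner) \<Rightarrow> 'y \<Rightarrow> 'x" where
  "mp_inverse A y = (THE x. x \<in> orth_compl (ker A) \<and> A x - y \<in> orth_compl (range A))"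

text \<open>Non-linear regularizing filter; \<phi> \<alpha> \<kappa> c stands for \<phi>_\<alpha>(\<kappa>, c).\<close>
definition nonlinear_reg_filter :: "(real \<Rightarrow> real \<Rightarrow> real \<Rightarrow> real) \<Rightarrow> bool" where
  "nonlinear_reg_filter \<phi> \<longleftrightarrow> (\<forall>\<alpha> \<kappa>. 0 < \<alpha> \<longrightarrow> 0 < \<kappa> \<longrightarrow>
       mono (\<phi> \<alpha> \<kappa>) \<and>
       (\<forall>x y. \<bar>\<phi> \<alpha> \<kappa> x - \<phi> \<alpha> \<kappa> y\<bar> \<le> \<bar>x - y\<bar>) \<and>
       \<phi> \<alpha> \<kappa> 0 = 0) \<and>
     (\<forall>\<kappa> c. 0 < \<kappa> \<longrightarrow> ((\<lambda>\<alpha>. \<phi> \<alpha> \<kappa> c) \<longlongrightarrow> c) (at_right 0))"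

definition assumption_B :: "(real \<Rightarrow> real \<Rightarrow> real \<Rightarrow> real) \<Rightarrow> bool" where
  "assumption_B \<phi> \<longleftrightarrow>
     (\<forall>\<kappa> x \<alpha> \<beta>. 0 < \<kappa> \<longrightarrow> 0 < \<alpha> \<longrightarrow> \<alpha> \<le> \<beta> \<longrightarrow> \<bar>\<phi> \<beta> \<kappa> x\<bar> \<le> \<bar>\<phi> \<alpha> \<kappa> x\<bar>) \<and>
     (\<exists>d e. 0 < d \<and> 0 < e \<and> (\<forall>\<kappa> \<alpha> x. 0 < \<kappa> \<longrightarrow> 0 < \<alpha> \<longrightarrow>
        \<bar>x\<bar> \<le> d * \<alpha> / \<kappa> \<longrightarrow> \<bar>\<phi> \<alpha> \<kappa> x\<bar> \<le> e * \<kappa> / sqrt \<alpha> * \<bar>x\<bar>))"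

text \<open>Coefficients M_\<kappa>^+ \<Phi>_{\<alpha>,\<kappa>} T_v^* y.\<close>
definition filt_coeffs :: "(real \<Rightarrow> real \<Rightarrow> real \<Rightarrow> real) \<Rightarrow> ('i \<Rightarrow> 'y::real_inner) \<Rightarrow>
    ('i \<Rightarrow> real) \<Rightarrow> real \<Rightarrow> 'y \<Rightarrow> 'i \<Rightarrow> real" where
  "filt_coeffs \<phi> v \<kappa> \<alpha> y = (\<lambda>l. \<phi> \<alpha> (\<kappa> l) (inner y (v l)) / \<kappa> l)"

text \<open>Domain of B_\<alpha>: \<Phi>_{\<alpha>,\<kappa>}(T_v^* y) \<in> dom(M_\<kappa>^+).\<close>
definition B_dom :: "(real \<Rightarrow> real \<Rightarrow> real \<Rightarrow> real) \<Rightarrow> 'i set \<Rightarrow> ('i \<Rightarrow> 'y::real_inner) \<Rightarrow>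
    ('i \<Rightarrow> real) \<Rightarrow> real \<Rightarrow> 'y set" where
  "B_dom \<phi> \<Lambda> v \<kappa> \<alpha> = {y. (\<lambda>l. \<phi> \<alpha> (\<kappa> l) (inner y (v l))) \<in> l2 \<Lambda> \<and>
                             filt_coeffs \<phi> v \<kappa> \<alpha> y \<in> l2 \<Lambda>}"

text \<open>Non-linear filtered DFD B_\<alpha>(y) = T_ub (M_\<kappa>^+ (\<Phi>_{\<alpha>,\<kappa>} (T_v^* y))).\<close>
definition B_op :: "(real \<Rightarrow> real \<Rightarrow> real \<Rightarrow> real) \<Rightarrow> 'i set \<Rightarrow> ('i \<Rightarrow> 'x::real_inner) \<Rightarrow>
    ('i \<Rightarrow> 'y::real_inner) \<Rightarrow> ('i \<Rightarrow> real) \<Rightarrow> real \<Rightarrow> 'y \<Rightarrow> 'x" where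
  "B_op \<phi> \<Lambda> ub v \<kappa> \<alpha> y = (\<Sum>\<^sub>\<infinity>l\<in>\<Lambda>. filt_coeffs \<phi> v \<kappa> \<alpha> y l *\<^sub>R ub l)"

definition weakly_converges :: "(nat \<Rightarrow> 'a::real_inner) \<Rightarrow> 'a \<Rightarrow> bool" where
  "weakly_converges xs x \<longleftrightarrow> (\<forall>z. (\<lambda>k. inner (xs k) z) \<longlonglongrightarrow> inner x z)"

end

theory Submission
  imports Defs
begin

text \<open>
  Let p = A^+ y. The DFD relation gives \<langle>y, v l\<rangle> / \<kappa> l = \<langle>p, u l\<rangle>, and p = \<Sum> \<langle>p, u l\<rangle> ub l.
  The coefficients c k l = \<phi> (\<alpha> k) (\<kappa> l) \<langle>y k, v l\<rangle> / \<kappa> l of B (\<alpha> k) (y k) converge to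
  \<langle>p, u l\<rangle> for every l by (F2) and (F4). They are also bounded in l2, uniformly in k: writing
  n l = \<langle>y k - y, v l\<rangle>, either \<bar>\<langle>y k, v l\<rangle>\<bar> is at most twice the exact coefficient, or it is at
  most 2 \<bar>n l\<bar>, and then (B2) for small and \<bar>\<phi> x\<bar> \<le> \<bar>x\<bar> for large arguments give
  c k l^2 \<le> 4 \<langle>p, u l\<rangle>^2 + (4 e^2 / \<alpha> k + 16 b \<delta> k^2 / (d^2 \<alpha> k^2)) n l^2 with \<Sum> n l^2 \<le> b \<delta> k^2
  by the Bessel bound b of v; this is bounded because \<delta> k^2 / \<alpha> k is. A bounded, pointwise
  convergent sequence in l2 converges weakly, and synthesis with the Bessel family ub is bounded.
\<close>

section \<open>Orthogonal projection and the Moore--Penrose inverse\<close>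

lemma orth_compl_eq_orthogonal_comp: "orth_compl W = W\<^sup>\<bottom>"
  by (auto simp: orth_compl_def orthogonal_comp_def orthogonal_def inner_commute)

lemma subspace_orth_compl: "subspace (orth_compl W)"
  unfolding orth_compl_eq_orthogonal_comp by (rule subspace_orthogonal_comp)

lemma subspace_closure:
  fixes S :: "'a::real_normed_vector set"
  assumes "subspace S"
  shows "subspace (closure S)"
  unfolding subspace_def
proof (intro conjI ballI allI)
  show "0 \<in> closure S"
    using assms closure_subset subspace_0 by blast
next
  fix x y assume "x \<in> closure S" "y \<in> closure S"
  then obtain f g where "\<And>n. f n \<in> S" "f \<longlonglongrightarrow> x" "\<And>n. g n \<in> S" "g \<longlonglongrightarrow> y"
    unfolding closure_sequential by blast
  then show "x + y \<in> closure S"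
    unfolding closure_sequential using assms
    by (intro exI[of _ "\<lambda>n. f n + g n"]) (auto intro: tendsto_add subspace_add)
next
  fix c :: real and x assume "x \<in> closure S"
  then obtain f where "\<And>n. f n \<in> S" "f \<longlonglongrightarrow> x"
    unfolding closure_sequential by blast
  then show "c *\<^sub>R x \<in> closure S"
    unfolding closure_sequential using assms
    by (intro exI[of _ "\<lambda>n. c *\<^sub>R f n"]) (auto intro: tendsto_scaleR subspace_scale)
qed

lemma subspace_ker: "linear A \<Longrightarrow> subspace (ker A)"
  unfolding ker_def by (rule linear_subspace_kernel)

lemma closed_ker: "bounded_linear A \<Longrightarrow> closed (ker A)"
  unfolding ker_def
  by (intro closed_Collect_eq linear_continuous_on continuous_on_const)

lemma convex_minimizing_sequence_Cauchy:
  fixes K :: "'a::real_inner set"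
  assumes "convex K" and wK: "\<And>n. w n \<in> K" and lower: "\<And>z. z \<in> K \<Longrightarrow> d \<le> (norm (x - z))\<^sup>2"
    and near: "\<And>n. (norm (x - w n))\<^sup>2 < d + 1 / real (Suc n)"
  shows "Cauchy w"
proof (rule metric_CauchyI)
  have w_dist: "(norm (w n - w m))\<^sup>2 \<le> 2 / real (Suc n) + 2 / real (Suc m)" for n m
  proof -
    \<comment> \<open>parallelogram law, with the midpoint of \<open>w n\<close> and \<open>w m\<close> lying in \<open>K\<close>\<close>
    have "(norm (w n - w m))\<^sup>2 = 2 * (norm (x - w n))\<^sup>2 + 2 * (norm (x - w m))\<^sup>2
        - 4 * (norm (x - ((1/2) *\<^sub>R w n + (1/2) *\<^sub>R w m)))\<^sup>2"
      by (simp add: power2_norm_eq_inner inner_commute algebra_simps)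
    moreover have "d \<le> (norm (x - ((1/2) *\<^sub>R w n + (1/2) *\<^sub>R w m)))\<^sup>2"
      using assms(1) wK by (intro lower convexD) auto
    ultimately show ?thesis
      using near[of n] near[of m] by linarith
  qed
  fix e :: real assume "0 < e"
  obtain N :: nat where N: "4 / e\<^sup>2 < real (Suc N)"
    using reals_Archimedean2 by (metis less_Suc_eq of_nat_less_iff order.strict_trans)
  have "dist (w m) (w n) < e" if "N \<le> m" "N \<le> n" for m n
  proof -
    have "2 / real (Suc m) \<le> 2 / real (Suc N)" "2 / real (Suc n) \<le> 2 / real (Suc N)"
      using that by (auto intro!: divide_left_mono)
    then have "2 / real (Suc m) + 2 / real (Suc n) \<le> 4 / real (Suc N)"
      by simp
    also have "\<dots> < e\<^sup>2"
      using N \<open>0 < e\<close> by (simp add: field_simps)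
    finally have "(norm (w m - w n))\<^sup>2 < e\<^sup>2"
      using w_dist[of m n] by linarith
    then show ?thesis
      using \<open>0 < e\<close> by (simp add: dist_norm power_less_imp_less_base)
  qed
  then show "\<exists>M. \<forall>m\<ge>M. \<forall>n\<ge>M. dist (w m) (w n) < e"
    by blast
qed

lemma closed_convex_nearest_point_exists:
  fixes K :: "'a::{real_inner,complete_space} set"
  assumes "convex K" "closed K" "K \<noteq> {}"
  obtains q where "q \<in> K" "\<And>w. w \<in> K \<Longrightarrow> norm (x - q) \<le> norm (x - w)"
proof -
  define d where "d = Inf ((\<lambda>w. (norm (x - w))\<^sup>2) ` K)"
  have d_le: "d \<le> (norm (x - w))\<^sup>2" if "w \<in> K" for w
    unfolding d_def using that by (intro cInf_lower bdd_belowI2[of _ 0]) auto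
  have "\<exists>w\<in>K. (norm (x - w))\<^sup>2 < d + 1 / real (Suc n)" for n
    using cInf_lessD[of "(\<lambda>w. (norm (x - w))\<^sup>2) ` K" "d + 1 / real (Suc n)"] assms(3)
    by (auto simp: d_def)
  then obtain w where wK: "\<And>n. w n \<in> K"
    and w_near: "\<And>n. (norm (x - w n))\<^sup>2 < d + 1 / real (Suc n)"
    by metis
  then obtain q where "w \<longlonglongrightarrow> q"
    using convex_minimizing_sequence_Cauchy[OF assms(1) wK d_le w_near]
      Cauchy_convergent_iff convergent_def by blast
  have "q \<in> K"
    using closed_sequentially[OF assms(2)] wK \<open>w \<longlonglongrightarrow> q\<close> by blast
  moreover have "(norm (x - q))\<^sup>2 \<le> d"
  proof (rule LIMSEQ_le)
    show "(\<lambda>n. (norm (x - w n))\<^sup>2) \<longlonglongrightarrow> (norm (x - q))\<^sup>2"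
      by (intro tendsto_intros \<open>w \<longlonglongrightarrow> q\<close>)
    show "(\<lambda>n. d + 1 / real (Suc n)) \<longlonglongrightarrow> d"
      using tendsto_add[OF tendsto_const LIMSEQ_Suc[OF lim_1_over_n], of d] by simp
    show "\<exists>N. \<forall>n\<ge>N. (norm (x - w n))\<^sup>2 \<le> d + 1 / real (Suc n)"
      using w_near less_imp_le by blast
  qed
  then have "norm (x - q) \<le> norm (x - w')" if "w' \<in> K" for w'
    using d_le[OF that] by (meson order_trans norm_ge_zero power2_le_imp_le)
  ultimately show ?thesis
    using that by blast
qed

lemma nearest_point_subspace_orthogonal:
  fixes K :: "'a::real_inner set"
  assumes "subspace K" "q \<in> K" and nearest: "\<And>w. w \<in> K \<Longrightarrow> norm (x - q) \<le> norm (x - w)"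
    and "z \<in> K"
  shows "inner (x - q) z = 0"
proof -
  define p where "p = inner (x - q) z"
  define N where "N = inner z z"
  have variation: "2 * t * p \<le> t\<^sup>2 * N" for t
  proof -
    have "q + t *\<^sub>R z \<in> K"
      using assms by (simp add: subspace_add subspace_scale)
    then have "(norm (x - q))\<^sup>2 \<le> (norm (x - (q + t *\<^sub>R z)))\<^sup>2"
      using nearest by (simp add: power_mono)
    then have "inner (x - q) (x - q) \<le> inner (x - (q + t *\<^sub>R z)) (x - (q + t *\<^sub>R z))"
      by (simp only: power2_norm_eq_inner)
    then show ?thesis
      by (simp add: p_def N_def inner_commute algebra_simps power2_eq_square)
  qed
  show ?thesis
  proof (cases "z = 0")
    case False
    then have "0 < N" by (simp add: N_def)
    \<comment> \<open>the variation at \<open>t = p / N\<close> forces \<open>p\<^sup>2 \<le> 0\<close>\<close>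
    with variation[of "p / N"] have "p\<^sup>2 \<le> 0"
      by (simp add: power2_eq_square field_simps)
    then show ?thesis by (simp add: p_def)
  qed simp
qed

lemma closed_subspace_orthogonal_decomposition:
  fixes K :: "'a::{real_inner,complete_space} set"
  assumes "subspace K" "closed K"
  obtains q where "q \<in> K" "x - q \<in> orth_compl K"
proof -
  obtain q where "q \<in> K" "\<And>w. w \<in> K \<Longrightarrow> norm (x - q) \<le> norm (x - w)"
    using closed_convex_nearest_point_exists[of K x] assms
      subspace_imp_convex subspace_0 by blast
  then show ?thesis
    using that nearest_point_subspace_orthogonal[OF assms(1)] by (auto simp: orth_compl_def)
qed

lemma mp_inverse_of_range:
  fixes A :: "'x::{real_inner,complete_space} \<Rightarrow> 'y::real_inner"
  assumes "bounded_linear A" "y \<in> range A"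
  shows "mp_inverse A y \<in> orth_compl (ker A) \<and> A (mp_inverse A y) = y"
proof -
  interpret bounded_linear A by fact
  obtain x0 where "y = A x0" using assms(2) by blast
  obtain q where q: "q \<in> ker A" "x0 - q \<in> orth_compl (ker A)"
    using closed_subspace_orthogonal_decomposition[OF subspace_ker[OF linear_axioms]
        closed_ker[OF assms(1)]] by blast
  have "A (x0 - q) = y"
    using q(1) \<open>y = A x0\<close> by (simp add: ker_def diff)
  have unique: "x = x0 - q" if "x \<in> orth_compl (ker A)" "A x - y \<in> orth_compl (range A)" for x
  proof -
    \<comment> \<open>\<open>A x - y\<close> lies in \<open>range A\<close> and is orthogonal to it\<close>
    have "A x - y = A (x - (x0 - q))"
      using \<open>A (x0 - q) = y\<close> by (simp add: diff)
    with that(2) have "inner (A (x - (x0 - q))) (A (x - (x0 - q))) = 0"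
      by (auto simp: orth_compl_def)
    then have "x - (x0 - q) \<in> ker A"
      by (simp add: ker_def)
    moreover have "x - (x0 - q) \<in> orth_compl (ker A)"
      using subspace_orth_compl that(1) q(2) by (rule subspace_diff)
    ultimately show ?thesis
      by (auto simp: orth_compl_def dest: bspec)
  qed
  have "mp_inverse A y = x0 - q"
    unfolding mp_inverse_def
  proof (rule the_equality)
    show "x0 - q \<in> orth_compl (ker A) \<and> A (x0 - q) - y \<in> orth_compl (range A)"
      using q(2) \<open>A (x0 - q) = y\<close> by (simp add: orth_compl_def)
  qed (use unique in blast)
  then show ?thesis
    using q(2) \<open>A (x0 - q) = y\<close> by simp
qed

section \<open>Square-summable families\<close>

lemma sum_le_infsum_nonneg:
  fixes f :: "'i \<Rightarrow> real"
  assumes "f summable_on A" "\<And>x. x \<in> A \<Longrightarrow> 0 \<le> f x" "finite F" "F \<subseteq> A"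
  shows "sum f F \<le> infsum f A"
  using infsum_mono_neutral[of f F f A] assms by auto

lemma infsum_split_finite:
  fixes f :: "'i \<Rightarrow> 'b::banach"
  assumes "f summable_on A" "finite F" "F \<subseteq> A"
  shows "infsum f A = sum f F + infsum f (A - F)"
proof -
  have "infsum f A = infsum f (F \<union> (A - F))"
    using assms(3) by (simp add: Un_absorb1)
  also have "\<dots> = sum f F + infsum f (A - F)"
    using assms(2) summable_on_subset_banach[OF assms(1)] by (subst infsum_Un_disjoint) auto
  finally show ?thesis .
qed

lemma infsum_tail_small:
  fixes f :: "'i \<Rightarrow> 'b::banach"
  assumes "f summable_on A" "0 < e"
  obtains F where "finite F" "F \<subseteq> A" "norm (infsum f (A - F)) \<le> e"
proof -
  obtain F where "finite F" "F \<subseteq> A" "dist (sum f F) (infsum f A) \<le> e"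
    using infsum_finite_approximation[OF assms] by blast
  then show ?thesis
    using that infsum_split_finite[OF assms(1)] by (simp add: dist_norm norm_minus_commute)
qed

lemma summable_on_Cauchy_criterion:
  fixes f :: "'i \<Rightarrow> 'b::{real_normed_vector,complete_space}"
  assumes small_tails: "\<And>e. 0 < e \<Longrightarrow> \<exists>F0. finite F0 \<and> F0 \<subseteq> A \<and>
      (\<forall>G. finite G \<longrightarrow> G \<subseteq> A - F0 \<longrightarrow> norm (sum f G) < e)"
  shows "f summable_on A"
proof -
  let ?F = "filtermap (sum f) (finite_subsets_at_top A)"
  have "cauchy_filter ?F"
    unfolding cauchy_filter_metric_filtermap
  proof (intro allI impI)
    fix e :: real assume "0 < e"
    then obtain F0 where F0: "finite F0" "F0 \<subseteq> A"
      "\<And>G. finite G \<Longrightarrow> G \<subseteq> A - F0 \<Longrightarrow> norm (sum f G) < e / 2"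
      using small_tails[of "e / 2"] by auto
    define P where "P F \<longleftrightarrow> finite F \<and> F0 \<subseteq> F \<and> F \<subseteq> A" for F
    have "eventually P (finite_subsets_at_top A)"
      unfolding eventually_finite_subsets_at_top P_def using F0(1,2) by blast
    moreover have "dist (sum f F) (sum f F') < e" if "P F" "P F'" for F F'
    proof -
      have "sum f F = sum f (F - F0) + sum f F0" "sum f F' = sum f (F' - F0) + sum f F0"
        using that by (auto simp: P_def intro: sum.subset_diff)
      moreover have "norm (sum f (F - F0)) < e / 2" "norm (sum f (F' - F0)) < e / 2"
        using that unfolding P_def by (blast intro: F0(3))+
      ultimately show ?thesis
        using norm_triangle_ineq4[of "sum f (F - F0)" "sum f (F' - F0)"]
        by (simp add: dist_norm)
    qed
    ultimately show "\<exists>P. eventually P (finite_subsets_at_top A) \<and>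
        (\<forall>F F'. P F \<and> P F' \<longrightarrow> dist (sum f F) (sum f F') < e)"
      by blast
  qed
  then obtain s where "?F \<le> nhds s"
    using cauchy_filter_complete_converges[of ?F UNIV]
    by (auto simp: filtermap_bot_iff complete_UNIV)
  then have "(sum f \<longlongrightarrow> s) (finite_subsets_at_top A)"
    by (simp add: filterlim_def)
  then show ?thesis
    unfolding summable_on_def has_sum_def by blast
qed

lemma abs_mult_le_weighted:
  fixes a b \<epsilon> :: real
  assumes "0 < \<epsilon>"
  shows "\<bar>a * b\<bar> \<le> \<epsilon> / 2 * a\<^sup>2 + 1 / (2 * \<epsilon>) * b\<^sup>2"
proof -
  have "\<bar>a * b\<bar> = 2 * (\<epsilon> * \<bar>a\<bar>) * \<bar>b\<bar> / (2 * \<epsilon>)"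
    using assms by (simp add: abs_mult)
  also have "\<dots> \<le> ((\<epsilon> * \<bar>a\<bar>)\<^sup>2 + \<bar>b\<bar>\<^sup>2) / (2 * \<epsilon>)"
    using assms by (intro divide_right_mono sum_squares_bound) simp
  also have "\<dots> = \<epsilon> / 2 * a\<^sup>2 + 1 / (2 * \<epsilon>) * b\<^sup>2"
    using assms by (simp add: power2_eq_square add_divide_distrib)
  finally show ?thesis .
qed

lemma abs_mult_summable_on:
  fixes a b :: "'i \<Rightarrow> real"
  assumes "(\<lambda>l. (a l)\<^sup>2) summable_on A" "(\<lambda>l. (b l)\<^sup>2) summable_on A"
  shows "(\<lambda>l. \<bar>a l * b l\<bar>) summable_on A"
proof (rule summable_on_comparison_test)
  show "(\<lambda>l. 1 / 2 * (a l)\<^sup>2 + 1 / (2 * 1) * (b l)\<^sup>2) summable_on A"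
    using assms by (intro summable_on_add summable_on_cmult_right)
  show "\<bar>a l * b l\<bar> \<le> 1 / 2 * (a l)\<^sup>2 + 1 / (2 * 1) * (b l)\<^sup>2" for l
    by (rule abs_mult_le_weighted) simp
qed simp

lemma mult_summable_on:
  fixes a b :: "'i \<Rightarrow> real"
  assumes "(\<lambda>l. (a l)\<^sup>2) summable_on A" "(\<lambda>l. (b l)\<^sup>2) summable_on A"
  shows "(\<lambda>l. a l * b l) summable_on A"
  by (rule abs_summable_summable) (simp only: real_norm_def abs_mult_summable_on[OF assms])

lemma abs_infsum_mult_le:
  fixes a b :: "'i \<Rightarrow> real"
  assumes "(\<lambda>l. (a l)\<^sup>2) summable_on A" "(\<lambda>l. (b l)\<^sup>2) summable_on A" "0 < \<epsilon>"
  shows "\<bar>\<Sum>\<^sub>\<infinity>l\<in>A. a l * b l\<bar>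
    \<le> \<epsilon> / 2 * (\<Sum>\<^sub>\<infinity>l\<in>A. (a l)\<^sup>2) + 1 / (2 * \<epsilon>) * (\<Sum>\<^sub>\<infinity>l\<in>A. (b l)\<^sup>2)"
proof -
  have "\<bar>\<Sum>\<^sub>\<infinity>l\<in>A. a l * b l\<bar> \<le> (\<Sum>\<^sub>\<infinity>l\<in>A. \<bar>a l * b l\<bar>)"
    using norm_infsum_bound[of "\<lambda>l. a l * b l" A] abs_mult_summable_on[OF assms(1,2)]
    by (simp only: real_norm_def)
  also have "\<dots> \<le> (\<Sum>\<^sub>\<infinity>l\<in>A. \<epsilon> / 2 * (a l)\<^sup>2 + 1 / (2 * \<epsilon>) * (b l)\<^sup>2)"
  proof (rule infsum_mono)
    show "(\<lambda>l. \<bar>a l * b l\<bar>) summable_on A"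
      by (rule abs_mult_summable_on[OF assms(1,2)])
    show "(\<lambda>l. \<epsilon> / 2 * (a l)\<^sup>2 + 1 / (2 * \<epsilon>) * (b l)\<^sup>2) summable_on A"
      using assms(1,2) by (intro summable_on_add summable_on_cmult_right)
  qed (rule abs_mult_le_weighted[OF assms(3)])
  also have "\<dots> = \<epsilon> / 2 * (\<Sum>\<^sub>\<infinity>l\<in>A. (a l)\<^sup>2) + 1 / (2 * \<epsilon>) * (\<Sum>\<^sub>\<infinity>l\<in>A. (b l)\<^sup>2)"
    using assms(1,2)
    by (simp only: infsum_add[OF summable_on_cmult_right summable_on_cmult_right]
        infsum_cmult_right')
  finally show ?thesis .
qed

lemma square_summable_le_majorant:
  fixes c a m :: "'i \<Rightarrow> real"
  assumes "a summable_on \<Lambda>" "m summable_on \<Lambda>" "infsum m \<Lambda> \<le> N" "0 \<le> s"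
    and le: "\<And>l. l \<in> \<Lambda> \<Longrightarrow> (c l)\<^sup>2 \<le> a l + s * m l"
  shows "(\<lambda>l. (c l)\<^sup>2) summable_on \<Lambda>" "(\<Sum>\<^sub>\<infinity>l\<in>\<Lambda>. (c l)\<^sup>2) \<le> infsum a \<Lambda> + s * N"
proof -
  have majorant: "(\<lambda>l. a l + s * m l) summable_on \<Lambda>"
    using assms(1,2) by (intro summable_on_add summable_on_cmult_right)
  then show "(\<lambda>l. (c l)\<^sup>2) summable_on \<Lambda>"
    by (rule summable_on_comparison_test) (use le in auto)
  then have "(\<Sum>\<^sub>\<infinity>l\<in>\<Lambda>. (c l)\<^sup>2) \<le> (\<Sum>\<^sub>\<infinity>l\<in>\<Lambda>. a l + s * m l)"
    using majorant le by (rule infsum_mono)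
  also have "\<dots> = infsum a \<Lambda> + s * infsum m \<Lambda>"
    by (simp only: infsum_add[OF assms(1) summable_on_cmult_right[OF assms(2)]] infsum_cmult_right')
  also have "\<dots> \<le> infsum a \<Lambda> + s * N"
    using assms(3,4) by (simp add: mult_left_mono)
  finally show "(\<Sum>\<^sub>\<infinity>l\<in>\<Lambda>. (c l)\<^sup>2) \<le> infsum a \<Lambda> + s * N" .
qed

lemma infsum_mult_tendsto_zero:
  fixes D :: "nat \<Rightarrow> 'i \<Rightarrow> real" and g :: "'i \<Rightarrow> real"
  assumes D_l2: "\<And>k. (\<lambda>l. (D k l)\<^sup>2) summable_on \<Lambda>"
    and D_bounded: "\<And>k. (\<Sum>\<^sub>\<infinity>l\<in>\<Lambda>. (D k l)\<^sup>2) \<le> M"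
    and g: "(\<lambda>l. (g l)\<^sup>2) summable_on \<Lambda>"
    and pointwise: "\<And>l. l \<in> \<Lambda> \<Longrightarrow> (\<lambda>k. D k l) \<longlonglongrightarrow> 0"
  shows "(\<lambda>k. \<Sum>\<^sub>\<infinity>l\<in>\<Lambda>. D k l * g l) \<longlonglongrightarrow> 0"
proof (rule LIMSEQ_I)
  fix \<eta> :: real assume "0 < \<eta>"
  have "0 \<le> M"
    using D_bounded[of 0] infsum_nonneg[of \<Lambda> "\<lambda>l. (D 0 l)\<^sup>2"] by simp
  define \<epsilon> where "\<epsilon> = \<eta> / (2 * (M + 1))"
  have "0 < \<epsilon>" "\<epsilon> / 2 * M < \<eta> / 4"
    using \<open>0 < \<eta>\<close> \<open>0 \<le> M\<close> by (simp_all add: \<epsilon>_def field_simps)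
  then have "0 < \<epsilon> * \<eta> / 2"
    using \<open>0 < \<eta>\<close> by simp
  \<comment> \<open>finitely many indices carry all of \<open>g\<close> up to a tail that costs \<open>\<eta> / 4\<close> against any \<open>D k\<close>\<close>
  then obtain F where F: "finite F" "F \<subseteq> \<Lambda>"
    and g_tail_small: "norm (\<Sum>\<^sub>\<infinity>l\<in>\<Lambda> - F. (g l)\<^sup>2) \<le> \<epsilon> * \<eta> / 2"
    using infsum_tail_small[OF g] by blast
  have "(\<lambda>k. \<Sum>l\<in>F. D k l * g l) \<longlonglongrightarrow> (\<Sum>l\<in>F. 0 * g l)"
    using F(2) pointwise by (intro tendsto_sum tendsto_mult tendsto_const) auto
  then obtain K where K: "\<And>k. K \<le> k \<Longrightarrow> \<bar>\<Sum>l\<in>F. D k l * g l\<bar> < \<eta> / 2"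
    using LIMSEQ_D[of _ 0 "\<eta> / 2"] \<open>0 < \<eta>\<close> by force
  have "\<bar>\<Sum>\<^sub>\<infinity>l\<in>\<Lambda>. D k l * g l\<bar> < \<eta>" if "K \<le> k" for k
  proof -
    have D_tail: "(\<lambda>l. (D k l)\<^sup>2) summable_on \<Lambda> - F" and g_tail: "(\<lambda>l. (g l)\<^sup>2) summable_on \<Lambda> - F"
      using D_l2 g by (auto intro: summable_on_subset_banach)
    have "(\<Sum>\<^sub>\<infinity>l\<in>\<Lambda> - F. (D k l)\<^sup>2) \<le> M"
      using infsum_mono_neutral[OF D_tail D_l2[of k]] D_bounded[of k] by force
    moreover have "(\<Sum>\<^sub>\<infinity>l\<in>\<Lambda> - F. (g l)\<^sup>2) \<le> \<epsilon> * \<eta> / 2"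
      using g_tail_small by (metis abs_le_D1 real_norm_def)
    ultimately have "\<bar>\<Sum>\<^sub>\<infinity>l\<in>\<Lambda> - F. D k l * g l\<bar> \<le> \<epsilon> / 2 * M + 1 / (2 * \<epsilon>) * (\<epsilon> * \<eta> / 2)"
      using abs_infsum_mult_le[OF D_tail g_tail \<open>0 < \<epsilon>\<close>] \<open>0 < \<epsilon>\<close>
      by (smt (verit) mult_left_mono divide_nonneg_nonneg)
    also have "\<dots> = \<epsilon> / 2 * M + \<eta> / 4"
      using \<open>0 < \<epsilon>\<close> by simp
    also have "\<dots> < \<eta> / 2"
      using \<open>\<epsilon> / 2 * M < \<eta> / 4\<close> by linarith
    finally have "\<bar>\<Sum>\<^sub>\<infinity>l\<in>\<Lambda> - F. D k l * g l\<bar> < \<eta> / 2" .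
    then show ?thesis
      unfolding infsum_split_finite[OF mult_summable_on[OF D_l2[of k] g] F]
      using K[OF that] abs_triangle_ineq[of "\<Sum>l\<in>F. D k l * g l" "\<Sum>\<^sub>\<infinity>l\<in>\<Lambda> - F. D k l * g l"]
      by linarith
  qed
  then show "\<exists>K. \<forall>k\<ge>K. norm ((\<Sum>\<^sub>\<infinity>l\<in>\<Lambda>. D k l * g l) - 0) < \<eta>"
    by auto
qed

lemma infsum_mult_tendsto_of_l2_bounded:
  fixes c :: "nat \<Rightarrow> 'i \<Rightarrow> real" and c0 g :: "'i \<Rightarrow> real"
  assumes c_l2: "\<And>k. (\<lambda>l. (c k l)\<^sup>2) summable_on \<Lambda>"
    and c_bounded: "\<And>k. (\<Sum>\<^sub>\<infinity>l\<in>\<Lambda>. (c k l)\<^sup>2) \<le> M"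
    and c0: "(\<lambda>l. (c0 l)\<^sup>2) summable_on \<Lambda>"
    and g: "(\<lambda>l. (g l)\<^sup>2) summable_on \<Lambda>"
    and pointwise: "\<And>l. l \<in> \<Lambda> \<Longrightarrow> (\<lambda>k. c k l) \<longlonglongrightarrow> c0 l"
  shows "(\<lambda>k. \<Sum>\<^sub>\<infinity>l\<in>\<Lambda>. c k l * g l) \<longlonglongrightarrow> (\<Sum>\<^sub>\<infinity>l\<in>\<Lambda>. c0 l * g l)"
proof -
  define D where "D k l = c k l - c0 l" for k l
  have D_sq_le: "(D k l)\<^sup>2 \<le> 2 * (c0 l)\<^sup>2 + 2 * (c k l)\<^sup>2" for k l
    using sum_squares_bound[of "c k l" "- c0 l"] by (simp add: D_def power2_diff)
  have "0 \<le> (2::real)"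
    by simp
  note D = square_summable_le_majorant[OF summable_on_cmult_right[OF c0] c_l2 c_bounded this D_sq_le]
  have "(\<lambda>k. D k l) \<longlonglongrightarrow> 0" if "l \<in> \<Lambda>" for l
    using pointwise[OF that] by (simp add: D_def LIM_zero)
  then have "(\<lambda>k. \<Sum>\<^sub>\<infinity>l\<in>\<Lambda>. D k l * g l) \<longlonglongrightarrow> 0"
    by (rule infsum_mult_tendsto_zero[OF D(1) D(2) g])
  moreover have "(\<Sum>\<^sub>\<infinity>l\<in>\<Lambda>. c k l * g l) = (\<Sum>\<^sub>\<infinity>l\<in>\<Lambda>. D k l * g l) + (\<Sum>\<^sub>\<infinity>l\<in>\<Lambda>. c0 l * g l)" for k
    using infsum_add[OF mult_summable_on[OF D(1) g] mult_summable_on[OF c0 g]]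
    by (simp add: D_def algebra_simps)
  ultimately show ?thesis
    using tendsto_add[OF _ tendsto_const, of _ 0 sequentially "\<Sum>\<^sub>\<infinity>l\<in>\<Lambda>. c0 l * g l"] by simp
qed

section \<open>Bessel families\<close>

definition bessel_bound :: "'a::real_inner set \<Rightarrow> ('i \<Rightarrow> 'a) \<Rightarrow> 'i set \<Rightarrow> real \<Rightarrow> bool" where
  "bessel_bound V f \<Lambda> b \<longleftrightarrow> (\<forall>l\<in>\<Lambda>. f l \<in> V) \<and>
     (\<forall>x\<in>V. (\<lambda>l. (inner x (f l))\<^sup>2) summable_on \<Lambda> \<and> (\<Sum>\<^sub>\<infinity>l\<in>\<Lambda>. (inner x (f l))\<^sup>2) \<le> b * (norm x)\<^sup>2)"

lemma is_frame_imp_bessel_bound: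
  assumes "is_frame V f \<Lambda>"
  obtains b where "0 < b" "bessel_bound V f \<Lambda> b"
  using assms unfolding is_frame_def bessel_bound_def by (meson order_less_le_trans)

lemma bessel_bound_synthesis_finite:
  assumes "subspace V" "bessel_bound V f \<Lambda> b" "0 < b" "finite G" "G \<subseteq> \<Lambda>"
  shows "(norm (\<Sum>l\<in>G. c l *\<^sub>R f l))\<^sup>2 \<le> b * (\<Sum>l\<in>G. (c l)\<^sup>2)"
proof -
  define w where "w = (\<Sum>l\<in>G. c l *\<^sub>R f l)"
  have "w \<in> V"
    using assms unfolding w_def bessel_bound_def by (auto intro: subspace_sum subspace_scale)
  then have "(\<Sum>l\<in>G. (inner w (f l))\<^sup>2) \<le> b * (norm w)\<^sup>2"
    using assms(2,4,5) unfolding bessel_bound_def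
    by (meson order_trans sum_le_infsum_nonneg zero_le_power2)
  have "(norm w)\<^sup>2 = (\<Sum>l\<in>G. c l * inner w (f l))"
    by (simp add: power2_norm_eq_inner w_def inner_sum_left inner_commute)
  also have "\<dots> \<le> (\<Sum>l\<in>G. b / 2 * (c l)\<^sup>2 + 1 / (2 * b) * (inner w (f l))\<^sup>2)"
    using abs_mult_le_weighted[OF assms(3)] by (intro sum_mono) (meson abs_ge_self order_trans)
  also have "\<dots> = b / 2 * (\<Sum>l\<in>G. (c l)\<^sup>2) + 1 / (2 * b) * (\<Sum>l\<in>G. (inner w (f l))\<^sup>2)"
    by (simp add: sum.distrib sum_distrib_left)
  also have "\<dots> \<le> b / 2 * (\<Sum>l\<in>G. (c l)\<^sup>2) + (norm w)\<^sup>2 / 2"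
    using \<open>(\<Sum>l\<in>G. (inner w (f l))\<^sup>2) \<le> b * (norm w)\<^sup>2\<close> assms(3) by (simp add: field_simps)
  finally show ?thesis
    by (simp add: w_def)
qed

lemma bessel_bound_UNIV:
  assumes "subspace V" "bessel_bound V f \<Lambda> b" "0 < b"
  shows "bessel_bound UNIV f \<Lambda> b"
proof -
  have partial_sums: "(\<Sum>l\<in>G. (inner z (f l))\<^sup>2) \<le> b * (norm z)\<^sup>2" if "finite G" "G \<subseteq> \<Lambda>" for z G
  proof -
    define S where "S = (\<Sum>l\<in>G. (inner z (f l))\<^sup>2)"
    define w where "w = (\<Sum>l\<in>G. inner z (f l) *\<^sub>R f l)"
    have "S = inner z w"
      by (simp add: S_def w_def inner_sum_right power2_eq_square)
    also have "\<dots> \<le> norm z * norm w"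
      by (rule norm_cauchy_schwarz)
    finally have "S\<^sup>2 \<le> (norm z)\<^sup>2 * (norm w)\<^sup>2"
      using sum_nonneg[of G "\<lambda>l. (inner z (f l))\<^sup>2"]
      by (metis S_def power_mono power_mult_distrib zero_le_power2)
    also have "\<dots> \<le> (norm z)\<^sup>2 * (b * S)"
      unfolding w_def S_def using bessel_bound_synthesis_finite[OF assms that]
      by (intro mult_left_mono) auto
    finally have "S * S \<le> (b * (norm z)\<^sup>2) * S"
      by (simp add: power2_eq_square algebra_simps)
    then show ?thesis
      using sum_nonneg[of G "\<lambda>l. (inner z (f l))\<^sup>2"] assms(3) unfolding S_def[symmetric]
      by (cases "S = 0") (auto intro: mult_right_le_imp_le)
  qed
  have "(\<lambda>l. (inner z (f l))\<^sup>2) summable_on \<Lambda>" for z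
    using partial_sums by (intro nonneg_bdd_above_summable_on bdd_aboveI2) auto
  then show ?thesis
    using partial_sums by (auto simp: bessel_bound_def intro: infsum_le_finite_sums)
qed

lemma bessel_bound_synthesis_summable:
  fixes f :: "'i \<Rightarrow> 'a::{real_inner,complete_space}"
  assumes "bessel_bound UNIV f \<Lambda> b" "0 < b" and c: "(\<lambda>l. (c l)\<^sup>2) summable_on \<Lambda>"
  shows "(\<lambda>l. c l *\<^sub>R f l) summable_on \<Lambda>"
proof (rule summable_on_Cauchy_criterion)
  fix e :: real assume "0 < e"
  then have "0 < e\<^sup>2 / (2 * b)"
    using \<open>0 < b\<close> by simp
  then obtain F0 where F0: "finite F0" "F0 \<subseteq> \<Lambda>"
    and "norm (\<Sum>\<^sub>\<infinity>l\<in>\<Lambda> - F0. (c l)\<^sup>2) \<le> e\<^sup>2 / (2 * b)"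
    using infsum_tail_small[OF c] by blast
  then have c_tail: "(\<Sum>\<^sub>\<infinity>l\<in>\<Lambda> - F0. (c l)\<^sup>2) \<le> e\<^sup>2 / (2 * b)"
    by (metis abs_le_D1 real_norm_def)
  have "norm (\<Sum>l\<in>G. c l *\<^sub>R f l) < e" if "finite G" "G \<subseteq> \<Lambda> - F0" for G
  proof -
    have "(\<Sum>l\<in>G. (c l)\<^sup>2) \<le> e\<^sup>2 / (2 * b)"
      using sum_le_infsum_nonneg[OF summable_on_subset_banach[OF c, of "\<Lambda> - F0"] _ that] c_tail
      by auto
    have "(norm (\<Sum>l\<in>G. c l *\<^sub>R f l))\<^sup>2 \<le> b * (\<Sum>l\<in>G. (c l)\<^sup>2)"
      using that by (intro bessel_bound_synthesis_finite[OF subspace_UNIV assms(1,2)]) auto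
    also have "\<dots> \<le> b * (e\<^sup>2 / (2 * b))"
      using \<open>(\<Sum>l\<in>G. (c l)\<^sup>2) \<le> e\<^sup>2 / (2 * b)\<close> \<open>0 < b\<close> by (meson less_imp_le mult_left_mono)
    also have "\<dots> = e\<^sup>2 / 2"
      using \<open>0 < b\<close> by simp
    also have "\<dots> < e\<^sup>2"
      using \<open>0 < e\<close> by simp
    finally show ?thesis
      using \<open>0 < e\<close> by (simp add: power_less_imp_less_base)
  qed
  then show "\<exists>F0. finite F0 \<and> F0 \<subseteq> \<Lambda> \<and>
      (\<forall>G. finite G \<longrightarrow> G \<subseteq> \<Lambda> - F0 \<longrightarrow> norm (\<Sum>l\<in>G. c l *\<^sub>R f l) < e)"
    using F0(1,2) by blast
qed

lemma bessel_bound_synthesis_weakly_converges: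
  fixes f :: "'i \<Rightarrow> 'a::{real_inner,complete_space}"
  assumes "bessel_bound UNIV f \<Lambda> b" "0 < b"
    and c_l2: "\<And>k. (\<lambda>l. (c k l)\<^sup>2) summable_on \<Lambda>"
    and c_bounded: "\<And>k. (\<Sum>\<^sub>\<infinity>l\<in>\<Lambda>. (c k l)\<^sup>2) \<le> M"
    and c0: "(\<lambda>l. (c0 l)\<^sup>2) summable_on \<Lambda>"
    and pointwise: "\<And>l. l \<in> \<Lambda> \<Longrightarrow> (\<lambda>k. c k l) \<longlonglongrightarrow> c0 l"
  shows "weakly_converges (\<lambda>k. \<Sum>\<^sub>\<infinity>l\<in>\<Lambda>. c k l *\<^sub>R f l) (\<Sum>\<^sub>\<infinity>l\<in>\<Lambda>. c0 l *\<^sub>R f l)"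
  unfolding weakly_converges_def
proof
  fix z
  have synthesis_inner: "inner (\<Sum>\<^sub>\<infinity>l\<in>\<Lambda>. a l *\<^sub>R f l) z = (\<Sum>\<^sub>\<infinity>l\<in>\<Lambda>. a l * inner (f l) z)"
    if "(\<lambda>l. (a l)\<^sup>2) summable_on \<Lambda>" for a
    using has_sum_bounded_linear[OF bounded_linear_inner_left
        has_sum_infsum[OF bessel_bound_synthesis_summable[OF assms(1,2) that]], of z]
    by (simp add: infsumI)
  have "(\<lambda>l. (inner (f l) z)\<^sup>2) summable_on \<Lambda>"
    using assms(1) by (simp add: bessel_bound_def inner_commute)
  then show "(\<lambda>k. inner (\<Sum>\<^sub>\<infinity>l\<in>\<Lambda>. c k l *\<^sub>R f l) z) \<longlonglongrightarrow> inner (\<Sum>\<^sub>\<infinity>l\<in>\<Lambda>. c0 l *\<^sub>R f l) z"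
    unfolding synthesis_inner[OF c_l2] synthesis_inner[OF c0]
    by (intro infsum_mult_tendsto_of_l2_bounded[where c = c and M = M] c_l2 c_bounded c0 pointwise)
qed

section \<open>Coefficients of the filtered DFD\<close>

lemma nonlinear_reg_filter_Lipschitz:
  assumes "nonlinear_reg_filter \<phi>" "0 < \<alpha>" "0 < \<kappa>"
  shows "\<bar>\<phi> \<alpha> \<kappa> s - \<phi> \<alpha> \<kappa> t\<bar> \<le> \<bar>s - t\<bar>"
  using assms unfolding nonlinear_reg_filter_def by blast

lemma nonlinear_reg_filter_abs_le:
  assumes "nonlinear_reg_filter \<phi>" "0 < \<alpha>" "0 < \<kappa>"
  shows "\<bar>\<phi> \<alpha> \<kappa> s\<bar> \<le> \<bar>s\<bar>"
proof -
  have "\<phi> \<alpha> \<kappa> 0 = 0"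
    using assms unfolding nonlinear_reg_filter_def by blast
  then show ?thesis
    using nonlinear_reg_filter_Lipschitz[OF assms, of s 0] by simp
qed

lemma contraction_quotient_le_of_large:
  fixes f :: "real \<Rightarrow> real"
  assumes "0 < \<kappa>" "0 < d * \<alpha>" "\<bar>f x\<bar> \<le> \<bar>x\<bar>" "d * \<alpha> / \<kappa> < \<bar>x\<bar>"
  shows "\<bar>f x\<bar> / \<kappa> \<le> x\<^sup>2 / (d * \<alpha>)"
proof -
  have "1 / \<kappa> < \<bar>x\<bar> / (d * \<alpha>)"
    using assms(1,2,4) by (simp add: field_simps)
  have "\<bar>f x\<bar> / \<kappa> \<le> \<bar>x\<bar> * (1 / \<kappa>)"
    using assms(1,3) by (simp add: divide_right_mono)
  also have "\<dots> \<le> \<bar>x\<bar> * (\<bar>x\<bar> / (d * \<alpha>))"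
    using \<open>1 / \<kappa> < \<bar>x\<bar> / (d * \<alpha>)\<close> by (intro mult_left_mono) auto
  also have "\<dots> = x\<^sup>2 / (d * \<alpha>)"
    by (simp add: power2_eq_square)
  finally show ?thesis .
qed

lemma filter_quotient_square_le:
  fixes \<kappa> \<alpha> d e N x y :: real
  assumes "0 < \<kappa>" "0 < \<alpha>" "0 < d" "0 < e"
    and contraction: "\<bar>f x\<bar> \<le> \<bar>x\<bar>"
    and small: "\<bar>x\<bar> \<le> d * \<alpha> / \<kappa> \<Longrightarrow> \<bar>f x\<bar> \<le> e * \<kappa> / sqrt \<alpha> * \<bar>x\<bar>"
    and noise: "(x - y)\<^sup>2 \<le> N"
  shows "(f x / \<kappa>)\<^sup>2 \<le> 4 * (y / \<kappa>)\<^sup>2 + (4 * e\<^sup>2 / \<alpha> + 16 * N / (d\<^sup>2 * \<alpha>\<^sup>2)) * (x - y)\<^sup>2"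
proof -
  define n where "n = x - y"
  have "0 \<le> N"
    using noise zero_le_power2 order_trans by blast
  have terms_nonneg: "0 \<le> 4 * (y / \<kappa>)\<^sup>2" "0 \<le> (4 * e\<^sup>2 / \<alpha>) * n\<^sup>2"
      "0 \<le> (16 * N / (d\<^sup>2 * \<alpha>\<^sup>2)) * n\<^sup>2"
    using \<open>0 < \<alpha>\<close> \<open>0 \<le> N\<close> by simp_all
  have quotient_le: "\<bar>f x\<bar> / \<kappa> \<le> \<bar>x\<bar> / \<kappa>"
    using contraction \<open>0 < \<kappa>\<close> by (simp add: divide_right_mono)
  have "(f x / \<kappa>)\<^sup>2 = (\<bar>f x\<bar> / \<kappa>)\<^sup>2"
    using \<open>0 < \<kappa>\<close> by (simp add: power_divide)
  \<comment> \<open>either \<open>x\<close> is dominated by the exact datum \<open>y\<close>, or by the noise \<open>n\<close>; in the latter case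
    (B2) handles small \<open>x\<close>, and for large \<open>x\<close> the factor \<open>1 / \<kappa>\<close> is traded for \<open>\<bar>x\<bar> / (d \<alpha>)\<close>\<close>
  moreover consider "\<bar>x\<bar> \<le> 2 * \<bar>y\<bar>" | "\<bar>x\<bar> \<le> 2 * \<bar>n\<bar>" "\<bar>x\<bar> \<le> d * \<alpha> / \<kappa>"
    | "\<bar>x\<bar> \<le> 2 * \<bar>n\<bar>" "d * \<alpha> / \<kappa> < \<bar>x\<bar>"
    using abs_triangle_ineq[of y n] unfolding n_def by fastforce
  then have "(\<bar>f x\<bar> / \<kappa>)\<^sup>2 \<le> 4 * (y / \<kappa>)\<^sup>2 + (4 * e\<^sup>2 / \<alpha>) * n\<^sup>2 + (16 * N / (d\<^sup>2 * \<alpha>\<^sup>2)) * n\<^sup>2"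
  proof cases
    case 1
    then have "\<bar>f x\<bar> / \<kappa> \<le> 2 * \<bar>y\<bar> / \<kappa>"
      using quotient_le \<open>0 < \<kappa>\<close> by (meson divide_right_mono less_imp_le order_trans)
    then have "(\<bar>f x\<bar> / \<kappa>)\<^sup>2 \<le> (2 * \<bar>y\<bar> / \<kappa>)\<^sup>2"
      using \<open>0 < \<kappa>\<close> by (intro power_mono) auto
    also have "\<dots> = 4 * (y / \<kappa>)\<^sup>2"
      by (simp add: power2_eq_square)
    finally show ?thesis
      using terms_nonneg by linarith
  next
    case 2
    have "\<bar>f x\<bar> \<le> e * \<kappa> / sqrt \<alpha> * \<bar>x\<bar>"
      using small 2(2) .
    then have "\<bar>f x\<bar> / \<kappa> \<le> e / sqrt \<alpha> * \<bar>x\<bar>"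
      using \<open>0 < \<kappa>\<close> by (simp add: field_simps)
    also have "\<dots> \<le> e / sqrt \<alpha> * (2 * \<bar>n\<bar>)"
      using 2(1) \<open>0 < e\<close> \<open>0 < \<alpha>\<close> by (intro mult_left_mono) auto
    finally have "(\<bar>f x\<bar> / \<kappa>)\<^sup>2 \<le> (e / sqrt \<alpha> * (2 * \<bar>n\<bar>))\<^sup>2"
      using \<open>0 < \<kappa>\<close> by (intro power_mono) auto
    also have "\<dots> = (4 * e\<^sup>2 / \<alpha>) * n\<^sup>2"
      using \<open>0 < \<alpha>\<close> by (simp add: power_mult_distrib power_divide)
    finally show ?thesis
      using terms_nonneg by linarith
  next
    case 3
    have "0 < d * \<alpha>"
      using \<open>0 < d\<close> \<open>0 < \<alpha>\<close> by simp
    then have "\<bar>f x\<bar> / \<kappa> \<le> x\<^sup>2 / (d * \<alpha>)"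
      using contraction_quotient_le_of_large[where f = f and x = x and d = d and \<alpha> = \<alpha>,
          OF \<open>0 < \<kappa>\<close> _ contraction 3(2)] by blast
    also have "\<dots> \<le> 4 * n\<^sup>2 / (d * \<alpha>)"
    proof -
      have "x\<^sup>2 \<le> (2 * n)\<^sup>2"
        using 3(1) abs_le_square_iff[of x "2 * n"] by (simp add: abs_mult)
      then show ?thesis
        using \<open>0 < d\<close> \<open>0 < \<alpha>\<close> by (intro divide_right_mono) (auto simp: power_mult_distrib)
    qed
    finally have "(\<bar>f x\<bar> / \<kappa>)\<^sup>2 \<le> (4 * n\<^sup>2 / (d * \<alpha>))\<^sup>2"
      using \<open>0 < \<kappa>\<close> by (intro power_mono) auto
    also have "\<dots> = 16 / (d\<^sup>2 * \<alpha>\<^sup>2) * n\<^sup>2 * n\<^sup>2"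
      by (simp add: power_divide power_mult_distrib)
    also have "\<dots> \<le> 16 / (d\<^sup>2 * \<alpha>\<^sup>2) * n\<^sup>2 * N"
      using noise by (intro mult_left_mono) (simp_all add: n_def)
    also have "\<dots> = 16 * N / (d\<^sup>2 * \<alpha>\<^sup>2) * n\<^sup>2"
      by simp
    finally show ?thesis
      using terms_nonneg by linarith
  qed
  ultimately show ?thesis
    by (simp add: n_def distrib_right)
qed

lemma filt_coeffs_square_summable_bounded:
  fixes v :: "'i \<Rightarrow> 'y::real_inner"
  assumes "nonlinear_reg_filter \<phi>" "assumption_B \<phi>"
    and "\<forall>l\<in>\<Lambda>. 0 < \<kappa> l"
    and v: "bessel_bound UNIV v \<Lambda> b" "0 < b"
    and y: "(\<lambda>l. (inner y (v l) / \<kappa> l)\<^sup>2) summable_on \<Lambda>"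
    and "\<forall>k. 0 < \<alpha> k" "\<forall>k. norm (yk k - y) \<le> \<delta> k"
    and ratio: "bdd_above (range (\<lambda>k. (\<delta> k)\<^sup>2 / \<alpha> k))"
  obtains M where "\<And>k. (\<lambda>l. (filt_coeffs \<phi> v \<kappa> (\<alpha> k) (yk k) l)\<^sup>2) summable_on \<Lambda>"
    "\<And>k. (\<Sum>\<^sub>\<infinity>l\<in>\<Lambda>. (filt_coeffs \<phi> v \<kappa> (\<alpha> k) (yk k) l)\<^sup>2) \<le> M"
proof -
  note \<kappa>_pos = assms(3)[rule_format] and \<alpha>_pos = assms(7)[rule_format]
  obtain d e where "0 < d" "0 < e" and small: "\<And>\<kappa> \<alpha> x. 0 < \<kappa> \<Longrightarrow> 0 < \<alpha> \<Longrightarrow>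
      \<bar>x\<bar> \<le> d * \<alpha> / \<kappa> \<Longrightarrow> \<bar>\<phi> \<alpha> \<kappa> x\<bar> \<le> e * \<kappa> / sqrt \<alpha> * \<bar>x\<bar>"
    using assms(2) unfolding assumption_B_def by blast
  obtain R where R: "\<And>k. (\<delta> k)\<^sup>2 / \<alpha> k \<le> R"
    using ratio by (auto simp: bdd_above_def)
  define C where "C = (\<Sum>\<^sub>\<infinity>l\<in>\<Lambda>. 4 * (inner y (v l) / \<kappa> l)\<^sup>2)"
  define n where "n k l = inner (yk k - y) (v l)" for k l
  define s where "s k = 4 * e\<^sup>2 / \<alpha> k + 16 * (b * (\<delta> k)\<^sup>2) / (d\<^sup>2 * (\<alpha> k)\<^sup>2)" for k
  have n_l2: "(\<lambda>l. (n k l)\<^sup>2) summable_on \<Lambda>" and n_sum: "(\<Sum>\<^sub>\<infinity>l\<in>\<Lambda>. (n k l)\<^sup>2) \<le> b * (\<delta> k)\<^sup>2" for k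
  proof -
    have "b * (norm (yk k - y))\<^sup>2 \<le> b * (\<delta> k)\<^sup>2"
      using assms(8) \<open>0 < b\<close> by (simp add: power_mono)
    moreover have "(\<lambda>l. (n k l)\<^sup>2) summable_on \<Lambda>"
      and "(\<Sum>\<^sub>\<infinity>l\<in>\<Lambda>. (n k l)\<^sup>2) \<le> b * (norm (yk k - y))\<^sup>2"
      using v(1) unfolding bessel_bound_def n_def by blast+
    ultimately show "(\<lambda>l. (n k l)\<^sup>2) summable_on \<Lambda>" "(\<Sum>\<^sub>\<infinity>l\<in>\<Lambda>. (n k l)\<^sup>2) \<le> b * (\<delta> k)\<^sup>2"
      by linarith+
  qed
  have coeff_le: "\<And>l. l \<in> \<Lambda> \<Longrightarrow>
      (filt_coeffs \<phi> v \<kappa> (\<alpha> k) (yk k) l)\<^sup>2 \<le> 4 * (inner y (v l) / \<kappa> l)\<^sup>2 + s k * (n k l)\<^sup>2" for k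
  proof -
    fix l assume l: "l \<in> \<Lambda>"
    have "(n k l)\<^sup>2 \<le> (\<Sum>\<^sub>\<infinity>l\<in>\<Lambda>. (n k l)\<^sup>2)"
      using sum_le_infsum_nonneg[OF n_l2[of k], where F = "{l}"] l by simp
    then have "(inner (yk k) (v l) - inner y (v l))\<^sup>2 \<le> b * (\<delta> k)\<^sup>2"
      using n_sum[of k] by (simp add: n_def inner_diff_left)
    from filter_quotient_square_le[where f = "\<phi> (\<alpha> k) (\<kappa> l)", OF \<kappa>_pos[OF l]
        \<alpha>_pos[of k] \<open>0 < d\<close> \<open>0 < e\<close>
        nonlinear_reg_filter_abs_le[OF assms(1) \<alpha>_pos[of k] \<kappa>_pos[OF l]]
        small[OF \<kappa>_pos[OF l] \<alpha>_pos[of k]] this]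
    show "(filt_coeffs \<phi> v \<kappa> (\<alpha> k) (yk k) l)\<^sup>2 \<le> 4 * (inner y (v l) / \<kappa> l)\<^sup>2 + s k * (n k l)\<^sup>2"
      unfolding filt_coeffs_def s_def n_def inner_diff_left .
  qed
  have "0 \<le> s k" for k
    using \<alpha>_pos[of k] \<open>0 < b\<close> by (simp add: s_def)
  have y4: "(\<lambda>l. 4 * (inner y (v l) / \<kappa> l)\<^sup>2) summable_on \<Lambda>"
    using y by (rule summable_on_cmult_right)
  have coeffs: "(\<lambda>l. (filt_coeffs \<phi> v \<kappa> (\<alpha> k) (yk k) l)\<^sup>2) summable_on \<Lambda>"
    "(\<Sum>\<^sub>\<infinity>l\<in>\<Lambda>. (filt_coeffs \<phi> v \<kappa> (\<alpha> k) (yk k) l)\<^sup>2) \<le> C + s k * (b * (\<delta> k)\<^sup>2)" for k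
    using square_summable_le_majorant[OF y4 n_l2 n_sum \<open>0 \<le> s k\<close> coeff_le] unfolding C_def
    by simp_all
  have weight_bound: "C + s k * (b * (\<delta> k)\<^sup>2) \<le> C + 4 * e\<^sup>2 * b * R + 16 * b\<^sup>2 / d\<^sup>2 * R\<^sup>2" for k
  proof -
    define r where "r = (\<delta> k)\<^sup>2 / \<alpha> k"
    have "0 \<le> r" "r \<le> R"
      using \<alpha>_pos[of k] R[of k] by (simp_all add: r_def)
    have "s k * (b * (\<delta> k)\<^sup>2) = 4 * e\<^sup>2 * b * r + 16 * b\<^sup>2 / d\<^sup>2 * r\<^sup>2"
      using \<alpha>_pos[of k] by (simp add: s_def r_def power_divide power2_eq_square algebra_simps)
    also have "\<dots> \<le> 4 * e\<^sup>2 * b * R + 16 * b\<^sup>2 / d\<^sup>2 * R\<^sup>2"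
      using \<open>0 \<le> r\<close> \<open>r \<le> R\<close> \<open>0 < b\<close> by (intro add_mono mult_left_mono power_mono) auto
    finally show ?thesis
      by simp
  qed
  show ?thesis
  proof (rule that)
    show "(\<lambda>l. (filt_coeffs \<phi> v \<kappa> (\<alpha> k) (yk k) l)\<^sup>2) summable_on \<Lambda>" for k
      by (rule coeffs(1))
    show "(\<Sum>\<^sub>\<infinity>l\<in>\<Lambda>. (filt_coeffs \<phi> v \<kappa> (\<alpha> k) (yk k) l)\<^sup>2)
        \<le> C + 4 * e\<^sup>2 * b * R + 16 * b\<^sup>2 / d\<^sup>2 * R\<^sup>2" for k
      using coeffs(2) weight_bound by (rule order_trans)
  qed
qed

lemma filt_coeffs_tendsto:
  assumes "nonlinear_reg_filter \<phi>" "0 < \<kappa> l" "\<forall>k. 0 < \<alpha> k" "\<alpha> \<longlonglongrightarrow> 0" "yk \<longlonglongrightarrow> y"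
  shows "(\<lambda>k. filt_coeffs \<phi> v \<kappa> (\<alpha> k) (yk k) l) \<longlonglongrightarrow> inner y (v l) / \<kappa> l"
proof -
  have "\<forall>k. \<alpha> k \<in> {0<..} \<and> \<alpha> k \<noteq> 0"
    using assms(3) by (simp add: dual_order.strict_implies_not_eq)
  then have "filterlim \<alpha> (at_right 0) sequentially"
    unfolding filterlim_at using assms(4) by (simp add: always_eventually)
  moreover have "((\<lambda>a. \<phi> a (\<kappa> l) (inner y (v l))) \<longlongrightarrow> inner y (v l)) (at_right 0)"
    using assms(1,2) unfolding nonlinear_reg_filter_def by blast
  ultimately have exact: "(\<lambda>k. \<phi> (\<alpha> k) (\<kappa> l) (inner y (v l))) \<longlonglongrightarrow> inner y (v l)"
    by (rule filterlim_compose[rotated])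
  have data_diff: "(\<lambda>k. inner (yk k) (v l) - inner y (v l)) \<longlonglongrightarrow> 0"
    using assms(5) by (intro LIM_zero tendsto_intros)
  have "(\<lambda>k. \<phi> (\<alpha> k) (\<kappa> l) (inner (yk k) (v l)) - \<phi> (\<alpha> k) (\<kappa> l) (inner y (v l))) \<longlonglongrightarrow> 0"
  proof (rule Lim_null_comparison[OF always_eventually tendsto_rabs_zero[OF data_diff]], intro allI)
    show "norm (\<phi> (\<alpha> k) (\<kappa> l) (inner (yk k) (v l)) - \<phi> (\<alpha> k) (\<kappa> l) (inner y (v l)))
        \<le> \<bar>inner (yk k) (v l) - inner y (v l)\<bar>" for k
      using nonlinear_reg_filter_Lipschitz[OF assms(1) assms(3)[rule_format] assms(2)] by simp
  qed
  from tendsto_divide[OF tendsto_add[OF this exact] tendsto_const[of "\<kappa> l"]] assms(2)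
  show ?thesis
    by (simp add: filt_coeffs_def)
qed

lemma B_domI:
  assumes "nonlinear_reg_filter \<phi>" "0 < \<alpha>" "\<forall>l\<in>\<Lambda>. 0 < \<kappa> l"
    and "(\<lambda>l. (inner y (v l))\<^sup>2) summable_on \<Lambda>"
    and "(\<lambda>l. (filt_coeffs \<phi> v \<kappa> \<alpha> y l)\<^sup>2) summable_on \<Lambda>"
  shows "y \<in> B_dom \<phi> \<Lambda> v \<kappa> \<alpha>"
proof -
  have "(\<lambda>l. (\<phi> \<alpha> (\<kappa> l) (inner y (v l)))\<^sup>2) summable_on \<Lambda>"
  proof (rule summable_on_comparison_test[OF assms(4)])
    show "(\<phi> \<alpha> (\<kappa> l) (inner y (v l)))\<^sup>2 \<le> (inner y (v l))\<^sup>2" if "l \<in> \<Lambda>" for l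
      using nonlinear_reg_filter_abs_le[OF assms(1,2)] assms(3) that
      by (simp add: abs_le_square_iff)
  qed simp
  with assms(5) show ?thesis
    by (simp add: B_dom_def l2_def)
qed

lemma DFD_coefficient:
  assumes "is_DFD A \<Lambda> u v \<kappa>" "l \<in> \<Lambda>"
  shows "inner (A x) (v l) / \<kappa> l = inner x (u l)"
proof -
  have "0 < \<kappa> l" "inner (A x) (v l) = \<kappa> l * inner x (u l)"
    using assms unfolding is_DFD_def by blast+
  then show ?thesis
    by simp
qed

lemma dual_frame_expansion:
  assumes "is_dual_frame V \<Lambda> u ub" "x \<in> V"
  shows "x = (\<Sum>\<^sub>\<infinity>l\<in>\<Lambda>. inner x (u l) *\<^sub>R ub l)"
  using assms unfolding is_dual_frame_def by (metis infsumI)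

lemma DFD_bessel_bounds:
  assumes "bounded_linear A" "is_DFD A \<Lambda> u v \<kappa>" "is_dual_frame (orth_compl (ker A)) \<Lambda> u ub"
  obtains bu bv bb where "bessel_bound (orth_compl (ker A)) u \<Lambda> bu"
    "bessel_bound UNIV v \<Lambda> bv" "0 < bv" "bessel_bound UNIV ub \<Lambda> bb" "0 < bb"
proof -
  have "subspace (closure (range A))"
    using linear_subspace_image[OF bounded_linear.linear[OF assms(1)] subspace_UNIV]
    by (rule subspace_closure)
  moreover obtain bu bv bb where "bessel_bound (orth_compl (ker A)) u \<Lambda> bu"
    "bessel_bound (closure (range A)) v \<Lambda> bv" "0 < bv"
    "bessel_bound (orth_compl (ker A)) ub \<Lambda> bb" "0 < bb"
    using assms(2,3) unfolding is_DFD_def is_dual_frame_def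
    by (metis is_frame_imp_bessel_bound)
  ultimately show ?thesis
    using that bessel_bound_UNIV subspace_orth_compl by metis
qed

theorem theorem4p11:
  fixes A :: "'x::{real_inner, complete_space} \<Rightarrow> 'y::{real_inner, complete_space}"
    and \<Lambda> :: "'i set" and u ub :: "'i \<Rightarrow> 'x" and v :: "'i \<Rightarrow> 'y" and \<kappa> :: "'i \<Rightarrow> real"
    and \<phi> :: "real \<Rightarrow> real \<Rightarrow> real \<Rightarrow> real"
    and \<delta> \<alpha> :: "nat \<Rightarrow> real" and y :: 'y and yk :: "nat \<Rightarrow> 'y" and \<alpha>t :: real
  assumes "bounded_linear A"
    and "is_DFD A \<Lambda> u v \<kappa>"
    and "bdd_above (\<kappa> ` \<Lambda>)"
    and "is_dual_frame (orth_compl (ker A)) \<Lambda> u ub"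
    and "nonlinear_reg_filter \<phi>"
    and "assumption_B \<phi>"
    and "\<forall>k. 0 < \<delta> k" and "\<delta> \<longlonglongrightarrow> 0"
    and "\<forall>k. 0 < \<alpha> k" and "\<alpha> \<longlonglongrightarrow> 0"
    and "(\<lambda>k. (\<delta> k)\<^sup>2 / \<alpha> k) \<longlonglongrightarrow> 0"
    and "y \<in> range A"
    and "0 < \<alpha>t"
    and "\<exists>c\<in>l2 \<Lambda>. \<forall>l\<in>\<Lambda>. inner y (v l) = \<phi> \<alpha>t (\<kappa> l) (c l)"
    and "\<forall>k. norm (yk k - y) \<le> \<delta> k"
  shows "(\<forall>k. yk k \<in> B_dom \<phi> \<Lambda> v \<kappa> (\<alpha> k)) \<and>
         weakly_converges (\<lambda>k. B_op \<phi> \<Lambda> ub v \<kappa> (\<alpha> k) (yk k)) (mp_inverse A y)"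
proof -
  define p where "p = mp_inverse A y"
  have "p \<in> orth_compl (ker A)" "A p = y"
    using mp_inverse_of_range[OF assms(1,12)] by (simp_all add: p_def)
  obtain bu bv bb where u: "bessel_bound (orth_compl (ker A)) u \<Lambda> bu"
    and v: "bessel_bound UNIV v \<Lambda> bv" "0 < bv" and ub: "bessel_bound UNIV ub \<Lambda> bb" "0 < bb"
    using DFD_bessel_bounds[OF assms(1,2,4)] .
  have \<kappa>_pos: "\<forall>l\<in>\<Lambda>. 0 < \<kappa> l"
    using assms(2) by (simp add: is_DFD_def)
  have p_coeffs: "inner y (v l) / \<kappa> l = inner p (u l)" if "l \<in> \<Lambda>" for l
    using DFD_coefficient[OF assms(2) that, of p] \<open>A p = y\<close> by simp
  have p_l2: "(\<lambda>l. (inner p (u l))\<^sup>2) summable_on \<Lambda>"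
    using u \<open>p \<in> orth_compl (ker A)\<close> by (simp add: bessel_bound_def)
  then have y_l2: "(\<lambda>l. (inner y (v l) / \<kappa> l)\<^sup>2) summable_on \<Lambda>"
    by (simp add: p_coeffs cong: summable_on_cong)
  have ratio: "bdd_above (range (\<lambda>k. (\<delta> k)\<^sup>2 / \<alpha> k))"
    using assms(11) by (intro Bseq_bdd_above convergent_imp_Bseq convergentI)
  obtain M where coeffs_l2: "\<And>k. (\<lambda>l. (filt_coeffs \<phi> v \<kappa> (\<alpha> k) (yk k) l)\<^sup>2) summable_on \<Lambda>"
    and coeffs_bounded: "\<And>k. (\<Sum>\<^sub>\<infinity>l\<in>\<Lambda>. (filt_coeffs \<phi> v \<kappa> (\<alpha> k) (yk k) l)\<^sup>2) \<le> M"
    using filt_coeffs_square_summable_bounded[OF assms(5,6) \<kappa>_pos v y_l2 assms(9,15) ratio] by blast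
  have data_convergence: "yk \<longlonglongrightarrow> y"
    by (rule LIM_zero_cancel, rule Lim_null_comparison[OF always_eventually[OF assms(15)] assms(8)])
  have "(\<lambda>k. filt_coeffs \<phi> v \<kappa> (\<alpha> k) (yk k) l) \<longlonglongrightarrow> inner p (u l)" if "l \<in> \<Lambda>" for l
    using filt_coeffs_tendsto[where v = v and \<kappa> = \<kappa> and l = l, OF assms(5) bspec[OF \<kappa>_pos that]
        assms(9,10) data_convergence] p_coeffs[OF that] by simp
  with ub coeffs_l2 coeffs_bounded p_l2
  have "weakly_converges (\<lambda>k. B_op \<phi> \<Lambda> ub v \<kappa> (\<alpha> k) (yk k)) p"
    unfolding B_op_def
    by (subst dual_frame_expansion[OF assms(4) \<open>p \<in> orth_compl (ker A)\<close>])
      (rule bessel_bound_synthesis_weakly_converges)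
  moreover have "yk k \<in> B_dom \<phi> \<Lambda> v \<kappa> (\<alpha> k)" for k
    using v(1) assms(9) by (intro B_domI[OF assms(5) _ \<kappa>_pos _ coeffs_l2]) (auto simp: bessel_bound_def)
  ultimately show ?thesis
    by (simp add: p_def)
qed

end
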